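(* Let $X,Y$ be irreducible sofic shifts and let $f:X\to Y$ be a finite-to-one factor map which is right-continuing almost-everywhere with some retract $n\ge0$. Then $f$ is right-closing almost-everywhere.
   Context: Subshifts are closed shift-invariant subsets of $A^{\mathbb Z}$, $A$ finite, with shift $\sigma(x)_i=x_{i+1}$; a factor map is a continuous, shift-commuting, onto map; finite-to-one means every point has finitely many preimages. A point $x\in X$ is left-transitive in $X$ if $\{\sigma^i(x): i\le 0\}$ is dense in $X$. Points $x,y$ are left-asymptotic if there is $n$ with $x_i=y_i$ for all $i\le n$. A factor map $f:X\to Y$ is right-closing almost-everywhere if for all left-transitive $x,y\in X$ that are left-asymptotic, $f(x)=f(y)$ implies $x=y$. For an integer $n\ge0$, $f$ is right-continuing almost-everywhere with retract $n$ if for every $x\in X$ and every left-transitive $y\in Y$ with $f(x)_i=y_i$ for all $i\le n$, there exists $x'\in X$ with $x'_i=x_i$ for all $i\le 0$ and $f(x')=y$. *)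

theory Defs
  imports Main
begin

text \<open>The topology is the product topology of discrete spaces; all topological notions below
  are written out explicitly in terms of agreement on central windows [-m,m].\<close>

definition shift :: "(int \<Rightarrow> 'a) \<Rightarrow> (int \<Rightarrow> 'a)" ("\<sigma>") where
  "\<sigma> x = (\<lambda>i. x (i + 1))"

definition shiftn :: "int \<Rightarrow> (int \<Rightarrow> 'a) \<Rightarrow> (int \<Rightarrow> 'a)" where
  "shiftn k x = (\<lambda>i. x (i + k))"

definition agree :: "nat \<Rightarrow> (int \<Rightarrow> 'a) \<Rightarrow> (int \<Rightarrow> 'a) \<Rightarrow> bool" where
  "agree m x y \<longleftrightarrow> (\<forall>i. \<bar>i\<bar> \<le> int m \<longrightarrow> x i = y i)"

definition closed_set :: "(int \<Rightarrow> 'a) set \<Rightarrow> bool" where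
  "closed_set X \<longleftrightarrow> (\<forall>x. (\<forall>m. \<exists>y\<in>X. agree m y x) \<longrightarrow> x \<in> X)"

definition subshift :: "(int \<Rightarrow> 'a::finite) set \<Rightarrow> bool" where
  "subshift X \<longleftrightarrow> closed_set X \<and> \<sigma> ` X = X"

definition occurs_at :: "'a list \<Rightarrow> (int \<Rightarrow> 'a) \<Rightarrow> int \<Rightarrow> bool" where
  "occurs_at w x i \<longleftrightarrow> (\<forall>k < length w. x (i + int k) = w ! k)"

definition lang :: "(int \<Rightarrow> 'a) set \<Rightarrow> 'a list set" where
  "lang X = {w. \<exists>x\<in>X. \<exists>i. occurs_at w x i}"

definition irreducible_shift :: "(int \<Rightarrow> 'a::finite) set \<Rightarrow> bool" where
  "irreducible_shift X \<longleftrightarrow> subshift X \<and>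
     (\<forall>u\<in>lang X. \<forall>w\<in>lang X. \<exists>v. u @ v @ w \<in> lang X)"

text \<open>Sofic shift: the set of label sequences of bi-infinite walks in a finite edge-labelled
  graph (vertices are natural numbers, edges are triples (source, label, target)).\<close>
definition sofic :: "(int \<Rightarrow> 'a::finite) set \<Rightarrow> bool" where
  "sofic X \<longleftrightarrow> subshift X \<and>
     (\<exists>E :: (nat \<times> 'a \<times> nat) set. finite E \<and>
        X = {x. \<exists>v :: int \<Rightarrow> nat. \<forall>i. (v i, x i, v (i + 1)) \<in> E})"

definition continuous_map_on :: "(int \<Rightarrow> 'a) set \<Rightarrow> ((int \<Rightarrow> 'a) \<Rightarrow> (int \<Rightarrow> 'b)) \<Rightarrow> bool" where
  "continuous_map_on X f \<longleftrightarrow>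
     (\<forall>x\<in>X. \<forall>n. \<exists>m. \<forall>y\<in>X. agree m y x \<longrightarrow> agree n (f y) (f x))"

definition factor_map ::
  "((int \<Rightarrow> 'a::finite) \<Rightarrow> (int \<Rightarrow> 'b::finite)) \<Rightarrow> (int \<Rightarrow> 'a) set \<Rightarrow> (int \<Rightarrow> 'b) set \<Rightarrow> bool" where
  "factor_map f X Y \<longleftrightarrow> continuous_map_on X f \<and> (\<forall>x\<in>X. f (\<sigma> x) = \<sigma> (f x)) \<and> f ` X = Y"

definition finite_to_one :: "((int \<Rightarrow> 'a) \<Rightarrow> (int \<Rightarrow> 'b)) \<Rightarrow> (int \<Rightarrow> 'a) set \<Rightarrow> (int \<Rightarrow> 'b) set \<Rightarrow> bool" where
  "finite_to_one f X Y \<longleftrightarrow> (\<forall>y\<in>Y. finite {x\<in>X. f x = y})"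

text \<open>x is left-transitive in X: {sigma^i x | i <= 0} is dense in X.\<close>
definition left_transitive :: "(int \<Rightarrow> 'a) set \<Rightarrow> (int \<Rightarrow> 'a) \<Rightarrow> bool" where
  "left_transitive X x \<longleftrightarrow> (\<forall>z\<in>X. \<forall>m. \<exists>i\<le>0. agree m (shiftn i x) z)"

definition left_asymptotic :: "(int \<Rightarrow> 'a) \<Rightarrow> (int \<Rightarrow> 'a) \<Rightarrow> bool" where
  "left_asymptotic x y \<longleftrightarrow> (\<exists>n. \<forall>i\<le>n. x i = y i)"

definition right_closing_ae ::
  "((int \<Rightarrow> 'a) \<Rightarrow> (int \<Rightarrow> 'b)) \<Rightarrow> (int \<Rightarrow> 'a) set \<Rightarrow> bool" where
  "right_closing_ae f X \<longleftrightarrow>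
     (\<forall>x\<in>X. \<forall>y\<in>X. left_transitive X x \<longrightarrow> left_transitive X y \<longrightarrow>
        left_asymptotic x y \<longrightarrow> f x = f y \<longrightarrow> x = y)"

definition right_continuing_ae ::
  "((int \<Rightarrow> 'a) \<Rightarrow> (int \<Rightarrow> 'b)) \<Rightarrow> (int \<Rightarrow> 'a) set \<Rightarrow> (int \<Rightarrow> 'b) set \<Rightarrow> nat \<Rightarrow> bool" where
  "right_continuing_ae f X Y n \<longleftrightarrow>
     (\<forall>x\<in>X. \<forall>y\<in>Y. left_transitive Y y \<longrightarrow> (\<forall>i\<le>int n. f x i = y i) \<longrightarrow>
        (\<exists>x'\<in>X. (\<forall>i\<le>0. x' i = x i) \<and> f x' = y))"

end

theory Submission
  imports Defs
begin

text \<open>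
  Suppose \<open>x \<noteq> y\<close> are left-transitive and left-asymptotic with \<open>f x = f y\<close>, and let \<open>D\<close> be the
  first coordinate where they differ. Left transitivity makes the block of \<open>x\<close> around \<open>D\<close>
  recur arbitrarily far to the left, at positions \<open>b\<^sub>0 > b\<^sub>1 > \<dots>\<close> whose recurrences compose;
  by pigeonhole a walk labelled \<open>y\<close> in a graph presenting \<open>X\<close> passes through the same vertex
  at infinitely many of them. Excising the part of \<open>y\<close> between two such visits gives a point of
  \<open>X\<close> that agrees with \<open>x\<close> up to a shifted copy of \<open>D\<close>, differs from \<open>x\<close> there, and has the
  same image as \<open>x\<close> far enough to the right for right-continuation to repair it into an exact
  preimage of \<open>f x\<close>. These preimages first differ from \<open>x\<close> at distinct places, so \<open>f x\<close> has
  infinitely many preimages. Only \<open>x\<close> needs to be left-transitive.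
\<close>

lemma shiftn_apply: "shiftn k x i = x (i + k)"
  by (simp add: shiftn_def)

lemma shift_eq_shiftn: "\<sigma> x = shiftn 1 x"
  by (simp add: shift_def shiftn_def)

lemma shiftn_shiftn [simp]: "shiftn a (shiftn b x) = shiftn (a + b) x"
  by (rule ext) (simp add: shiftn_apply algebra_simps)

lemma shiftn_0 [simp]: "shiftn 0 x = x"
  by (rule ext) (simp add: shiftn_apply)

lemma agree_mono: "agree m x y \<Longrightarrow> m' \<le> m \<Longrightarrow> agree m' x y"
  by (auto simp: agree_def)

definition first_diff_at :: "(int \<Rightarrow> 'a) \<Rightarrow> (int \<Rightarrow> 'a) \<Rightarrow> int \<Rightarrow> bool" where
  "first_diff_at x y s \<longleftrightarrow> (\<forall>i<s. x i = y i) \<and> x s \<noteq> y s"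

lemma first_diff_at_unique: "first_diff_at x y s \<Longrightarrow> first_diff_at x y t \<Longrightarrow> s = t"
  unfolding first_diff_at_def by (metis linorder_neqE)

lemma left_asymptotic_first_diff:
  assumes "left_asymptotic x y" and "x \<noteq> y"
  shows "\<exists>D. first_diff_at x y D"
proof -
  obtain N where N: "\<forall>i\<le>N. x i = y i" using assms(1) unfolding left_asymptotic_def by blast
  obtain k where k: "x k \<noteq> y k" using assms(2) by blast
  define S where "S = {i. x i \<noteq> y i} \<inter> {..k}"
  have "S \<subseteq> {N<..k}" using N by (auto simp: S_def not_less[symmetric])
  then have "finite S" by (rule finite_subset) simp
  moreover have "k \<in> S" using k by (simp add: S_def)
  ultimately have "Min S \<in> S" "\<forall>i\<in>S. Min S \<le> i" using Min_in by auto
  then have "first_diff_at x y (Min S)"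
    unfolding first_diff_at_def S_def by force
  then show ?thesis ..
qed

lemma subshift_shiftn:
  assumes "subshift X" and "u \<in> X"
  shows "shiftn k u \<in> X"
proof -
  have forward: "shiftn 1 w \<in> X" and backward: "shiftn (-1) w \<in> X" if "w \<in> X" for w
  proof -
    show "shiftn 1 w \<in> X" using assms(1) that unfolding subshift_def shift_eq_shiftn by blast
    from assms(1) that obtain q where "q \<in> X" "w = shiftn 1 q"
      unfolding subshift_def shift_eq_shiftn by (metis imageE)
    then show "shiftn (-1) w \<in> X" by simp
  qed
  show ?thesis
  proof (induction k rule: int_induct[where k=0])
    case base then show ?case using assms(2) by simp
  next
    case (step1 i) then show ?case using forward[of "shiftn i u"] by (simp add: add.commute)
  next
    case (step2 i) then show ?case using backward[of "shiftn i u"] by simp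
  qed
qed

lemma factor_map_shiftn:
  assumes "subshift X" and "factor_map f X Y" and "u \<in> X"
  shows "f (shiftn k u) = shiftn k (f u)"
proof -
  have step: "f (shiftn 1 w) = shiftn 1 (f w)" if "w \<in> X" for w
    using assms(2) that unfolding factor_map_def shift_eq_shiftn by blast
  show ?thesis
  proof (induction k rule: int_induct[where k=0])
    case base then show ?case by simp
  next
    case (step1 i)
    then show ?case using step[OF subshift_shiftn[OF assms(1,3)], of i]
      by (metis add.commute shiftn_shiftn)
  next
    case (step2 i)
    have "f (shiftn i u) = shiftn 1 (f (shiftn (i - 1) u))"
      using step[OF subshift_shiftn[OF assms(1,3)], of "i - 1"] by simp
    then have "shiftn (-1) (f (shiftn i u)) = f (shiftn (i - 1) u)" by simp
    then show ?case using step2 by simp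
  qed
qed

lemma infinite_subset_agree:
  fixes U :: "nat \<Rightarrow> int \<Rightarrow> 'a::finite"
  assumes "infinite A"
  shows "\<exists>B\<subseteq>A. infinite B \<and> (\<forall>k\<in>B. \<forall>k'\<in>B. agree m (U k) (U k'))"
proof -
  let ?window = "\<lambda>k. map (U k) [- int m .. int m]"
  have "?window ` A \<subseteq> {w. set w \<subseteq> UNIV \<and> length w = length [- int m .. int m]}" by auto
  then have "finite (?window ` A)"
    by (rule finite_subset) (rule finite_lists_length_eq, simp)
  then obtain k0 where k0: "infinite {k\<in>A. ?window k = ?window k0}"
    using pigeonhole_infinite[OF assms] by blast
  have "agree m (U k) (U k')" if "?window k = ?window k'" for k k'
    using that by (auto simp: agree_def abs_le_iff)
  with k0 show ?thesis
    by (intro exI[of _ "{k\<in>A. ?window k = ?window k0}"]) auto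
qed

lemma agree_cluster_point:
  fixes U :: "nat \<Rightarrow> int \<Rightarrow> 'a::finite"
  shows "\<exists>p. \<forall>m. infinite {k. agree m (U k) p}"
proof -
  define refine where
    "refine A m = (SOME B. B \<subseteq> A \<and> infinite B \<and> (\<forall>k\<in>B. \<forall>k'\<in>B. agree m (U k) (U k')))"
    for A m
  have refine: "refine A m \<subseteq> A \<and> infinite (refine A m) \<and>
      (\<forall>k\<in>refine A m. \<forall>k'\<in>refine A m. agree m (U k) (U k'))" if "infinite A" for A m
    unfolding refine_def using infinite_subset_agree[OF that] by (rule someI_ex)
  define S where "S = rec_nat (refine UNIV 0) (\<lambda>m A. refine A (Suc m))"
  have S: "infinite (S m) \<and> (\<forall>k\<in>S m. \<forall>k'\<in>S m. agree m (U k) (U k'))" for m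
  proof (induction m)
    case 0 then show ?case using refine[of UNIV 0] by (simp add: S_def)
  next
    case (Suc m) then show ?case using refine[of "S m" "Suc m"] by (simp add: S_def)
  qed
  have "S (Suc m) \<subseteq> S m" for m
    using refine[of "S m" "Suc m"] S by (simp add: S_def)
  then have S_antimono: "m \<le> m' \<Longrightarrow> S m' \<subseteq> S m" for m m'
    by (rule lift_Suc_antimono_le)
  define p where "p j = U (SOME k. k \<in> S (nat \<bar>j\<bar>)) j" for j
  have "agree m (U k) p" if "k \<in> S m" for k m
    unfolding agree_def
  proof (intro allI impI)
    fix j :: int assume "\<bar>j\<bar> \<le> int m"
    then have "nat \<bar>j\<bar> \<le> m" by (simp add: nat_le_iff)
    then have "k \<in> S (nat \<bar>j\<bar>)" using S_antimono that by blast
    define k' where "k' = (SOME k. k \<in> S (nat \<bar>j\<bar>))"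
    have "k' \<in> S (nat \<bar>j\<bar>)"
      unfolding k'_def using S[of "nat \<bar>j\<bar>"] by (metis infinite_imp_nonempty some_in_eq)
    with \<open>k \<in> S (nat \<bar>j\<bar>)\<close> have "agree (nat \<bar>j\<bar>) (U k) (U k')" using S by blast
    then show "U k j = p j" unfolding p_def k'_def agree_def by simp
  qed
  then have "S m \<subseteq> {k. agree m (U k) p}" for m by blast
  then show ?thesis by (meson S infinite_super)
qed

definition sliding_block_radius ::
  "((int \<Rightarrow> 'a) \<Rightarrow> (int \<Rightarrow> 'b)) \<Rightarrow> (int \<Rightarrow> 'a) set \<Rightarrow> nat \<Rightarrow> bool" where
  "sliding_block_radius f X r \<longleftrightarrow> (\<forall>u\<in>X. \<forall>w\<in>X. agree r u w \<longrightarrow> f u 0 = f w 0)"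

text \<open>Uniform continuity, from compactness of the full shift.\<close>
lemma continuous_map_on_sliding_block_radius:
  fixes X :: "(int \<Rightarrow> 'a::finite) set" and f :: "(int \<Rightarrow> 'a) \<Rightarrow> (int \<Rightarrow> 'b)"
  assumes "closed_set X" and "continuous_map_on X f"
  shows "\<exists>r. sliding_block_radius f X r"
proof (rule ccontr)
  assume "\<nexists>r. sliding_block_radius f X r"
  then have "\<forall>m. \<exists>u w. u \<in> X \<and> w \<in> X \<and> agree m u w \<and> f u 0 \<noteq> f w 0"
    unfolding sliding_block_radius_def by metis
  then obtain U W where UW: "\<And>m. U m \<in> X \<and> W m \<in> X \<and> agree m (U m) (W m) \<and> f (U m) 0 \<noteq> f (W m) 0"
    by metis
  obtain p where p: "\<And>m. infinite {k. agree m (U k) p}"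
    using agree_cluster_point by blast
  have "\<exists>u\<in>X. agree m u p" for m
  proof -
    obtain k where "agree m (U k) p" using p[of m] by (metis empty_Collect_eq finite.emptyI)
    then show ?thesis using UW by blast
  qed
  then have "p \<in> X" using assms(1) unfolding closed_set_def by blast
  then obtain M where M: "\<And>q. q \<in> X \<Longrightarrow> agree M q p \<Longrightarrow> agree 0 (f q) (f p)"
    using assms(2) unfolding continuous_map_on_def by blast
  have "\<not> {k. agree M (U k) p} \<subseteq> {..<M}"
    using p[of M] finite_subset by blast
  then obtain k where k: "M \<le> k" "agree M (U k) p" by (auto simp: not_less subset_iff)
  have "agree M (W k) p"
    using agree_mono[of k "U k" "W k" M] k UW[of k] by (simp add: agree_def)
  then have "agree 0 (f (U k)) (f p)" "agree 0 (f (W k)) (f p)"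
    using M UW k(2) by blast+
  then show False using UW[of k] by (simp add: agree_def)
qed

lemma sliding_block_radius_window:
  assumes "subshift X" and "factor_map f X Y" and "sliding_block_radius f X r"
    and "u \<in> X" and "w \<in> X"
    and "\<And>i. j - int r \<le> i \<Longrightarrow> i \<le> j + int r \<Longrightarrow> u i = w (i + e)"
  shows "f u j = f w (j + e)"
proof -
  have "agree r (shiftn j u) (shiftn (j + e) w)"
    using assms(6) by (auto simp: agree_def shiftn_apply algebra_simps)
  then have "f (shiftn j u) 0 = f (shiftn (j + e) w) 0"
    using assms(3-5) subshift_shiftn[OF assms(1)] unfolding sliding_block_radius_def by blast
  then show ?thesis
    using factor_map_shiftn[OF assms(1,2)] assms(4,5) by (simp add: shiftn_apply)
qed

lemma left_transitive_recurrence: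
  assumes "subshift X" and "x \<in> X" and "left_transitive X x"
  shows "\<exists>e<c. \<forall>i. \<alpha> \<le> i \<and> i \<le> \<beta> \<longrightarrow> x (i + e) = x i"
proof -
  define t where "t = 1 - c"
  define m where "m = nat (max \<bar>\<alpha> - t\<bar> \<bar>\<beta> - t\<bar>)"
  obtain j where j: "j \<le> 0" "agree m (shiftn j x) (shiftn t x)"
    using assms subshift_shiftn unfolding left_transitive_def by blast
  show ?thesis
  proof (intro exI[of _ "j - t"] conjI allI impI)
    show "j - t < c" using j(1) by (simp add: t_def)
    fix i assume "\<alpha> \<le> i \<and> i \<le> \<beta>"
    then have "\<bar>i - t\<bar> \<le> int m" unfolding m_def by auto
    then have "x ((i - t) + j) = x ((i - t) + t)"
      using j(2) unfolding agree_def shiftn_apply by blast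
    then show "x (i + (j - t)) = x i" by (simp add: algebra_simps)
  qed
qed

lemma left_transitive_shiftn:
  assumes "subshift X" and "x \<in> X" and "left_transitive X x"
  shows "left_transitive X (shiftn t x)"
  unfolding left_transitive_def
proof (intro ballI allI)
  fix z m assume "z \<in> X"
  then obtain j where j: "j \<le> 0" "agree m (shiftn j x) z"
    using assms(3) unfolding left_transitive_def by blast
  obtain e where e: "e < t - j + 1"
    "\<forall>i. j - int m \<le> i \<and> i \<le> j + int m \<longrightarrow> x (i + e) = x i"
    using left_transitive_recurrence[OF assms, where c = "t - j + 1"] by blast
  have "agree m (shiftn (j + e - t) (shiftn t x)) z"
    unfolding agree_def
  proof (intro allI impI)
    fix i :: int assume "\<bar>i\<bar> \<le> int m"
    then have "x (i + j + e) = x (i + j)" and "x (i + j) = z i"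
      using e(2)[rule_format, of "i + j"] j(2) by (auto simp: agree_def shiftn_apply abs_le_iff)
    then show "shiftn (j + e - t) (shiftn t x) i = z i"
      by (simp add: shiftn_apply algebra_simps)
  qed
  moreover have "j + e - t \<le> 0" using e(1) by simp
  ultimately show "\<exists>i\<le>0. agree m (shiftn i (shiftn t x)) z" by blast
qed

lemma left_transitive_image:
  assumes "subshift X" and "factor_map f X Y"
    and "x \<in> X" and "left_transitive X x"
  shows "left_transitive Y (f x)"
  unfolding left_transitive_def
proof (intro ballI allI)
  fix z m assume "z \<in> Y"
  then obtain p where p: "p \<in> X" "z = f p" using assms(2) unfolding factor_map_def by blast
  then obtain M where M: "\<And>q. q \<in> X \<Longrightarrow> agree M q p \<Longrightarrow> agree m (f q) (f p)"
    using assms(2) unfolding factor_map_def continuous_map_on_def by blast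
  obtain j where j: "j \<le> 0" "agree M (shiftn j x) p"
    using assms(4) p(1) unfolding left_transitive_def by blast
  have "agree m (f (shiftn j x)) z"
    using M[OF subshift_shiftn[OF assms(1,3)] j(2)] p(2) by simp
  then show "\<exists>i\<le>0. agree m (shiftn i (f x)) z"
    using j(1) factor_map_shiftn[OF assms(1-3)] by auto
qed

lemma left_transitive_recurrence_chain:
  assumes "subshift X" and "x \<in> X" and "left_transitive X x"
  obtains b :: "nat \<Rightarrow> int" where "b 0 < B" and "\<And>k k'. k < k' \<Longrightarrow> b k' < b k"
    and "\<And>k k' i. k \<le> k' \<Longrightarrow> b k - L \<le> i \<Longrightarrow> i \<le> H \<Longrightarrow> x (i + (b k' - b k)) = x i"
proof -
  have "\<forall>a. \<exists>e<0. \<forall>i. a - L \<le> i \<and> i \<le> H \<longrightarrow> x (i + e) = x i"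
    using left_transitive_recurrence[OF assms, where c = 0] by blast
  then obtain G where G_neg: "\<And>a. G a < 0"
    and G: "\<And>a i. a - L \<le> i \<Longrightarrow> i \<le> H \<Longrightarrow> x (i + G a) = x i"
    by metis
  define b where "b k = ((\<lambda>a. a + G a) ^^ k) (B - 1)" for k
  have b_Suc: "b (Suc k) = b k + G (b k)" for k by (simp add: b_def)
  have b_dec: "k < k' \<Longrightarrow> b k' < b k" for k k'
    using lift_Suc_mono_less[of "\<lambda>k. - b k"] G_neg b_Suc by force
  have "x (i + (b k' - b k)) = x i" if "k \<le> k'" "b k - L \<le> i" "i \<le> H" for k k' i
    using that(1)
  proof (induction k' rule: dec_induct)
    case base then show ?case by simp
  next
    case (step k')
    define i' where "i' = i + (b k' - b k)"
    have "b k' \<le> b k" using b_dec step(1) by (cases "k = k'") (auto simp: less_imp_le)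
    then have "x (i' + G (b k')) = x i'" using G that(2,3) unfolding i'_def by simp
    then show ?case using step(3) b_Suc unfolding i'_def by (simp add: algebra_simps)
  qed
  moreover have "b 0 < B" by (simp add: b_def)
  ultimately show thesis using that b_dec by blast
qed

lemma infinite_repetitions_after:
  fixes c :: "nat \<Rightarrow> 'b"
  assumes "finite (range c)"
  shows "\<exists>k0. infinite {k. k0 < k \<and> c k = c k0}"
proof -
  obtain k0 where "infinite {k. c k = c k0}"
    using pigeonhole_infinite[OF infinite_UNIV_nat assms] by auto
  moreover have "{k. c k = c k0} \<subseteq> {k. k0 < k \<and> c k = c k0} \<union> {..k0}" by auto
  ultimately show ?thesis using finite_subset by blast
qed

lemma walk_labels_splice:
  assumes "X = {x. \<exists>v :: int \<Rightarrow> nat. \<forall>i. (v i, x i, v (i + 1)) \<in> E}"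
    and "\<forall>i. (v i, y i, v (i + 1)) \<in> E" and "v (c + 1 + d) = v (c + 1)"
  shows "(\<lambda>i. if i \<le> c then y i else y (i + d)) \<in> X"
proof -
  define v' where "v' i = (if i \<le> c then v i else v (i + d))" for i
  have "(v' i, (if i \<le> c then y i else y (i + d)), v' (i + 1)) \<in> E" for i
  proof (cases "i \<le> c")
    case True
    then show ?thesis
      using assms(2,3) by (cases "i = c") (auto simp: v'_def)
  next
    case False
    then show ?thesis
      using assms(2)[rule_format, of "i + d"] by (simp add: v'_def algebra_simps)
  qed
  then show ?thesis using assms(1) by blast
qed

lemma right_continuing_ae_at:
  assumes "subshift X" and fm: "factor_map f X Y" and rc: "right_continuing_ae f X Y n"
    and "w \<in> X" and "x \<in> X" and "left_transitive X x"
    and "\<And>j. j \<le> s + int n \<Longrightarrow> f w j = f x j"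
  shows "\<exists>w'\<in>X. (\<forall>i\<le>s. w' i = w i) \<and> f w' = f x"
proof -
  have sx: "shiftn s x \<in> X" and sw: "shiftn s w \<in> X"
    using subshift_shiftn assms(1,4,5) by blast+
  have fx: "f (shiftn s x) = shiftn s (f x)" using factor_map_shiftn[OF assms(1) fm assms(5)] .
  have "shiftn s (f x) \<in> Y"
    using fm sx unfolding fx[symmetric] factor_map_def by blast
  moreover have "left_transitive Y (shiftn s (f x))"
    using left_transitive_image[OF assms(1) fm sx left_transitive_shiftn[OF assms(1,5,6)]]
    unfolding fx .
  moreover have "\<forall>i\<le>int n. f (shiftn s w) i = shiftn s (f x) i"
    using assms(7) factor_map_shiftn[OF assms(1) fm assms(4)] by (simp add: shiftn_apply)
  ultimately obtain x' where x': "x' \<in> X" "\<forall>i\<le>0. x' i = shiftn s w i" "f x' = shiftn s (f x)"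
    using rc sw unfolding right_continuing_ae_def by blast
  show ?thesis
  proof (intro bexI conjI allI impI)
    show "shiftn (- s) x' \<in> X" using subshift_shiftn[OF assms(1) x'(1)] .
    show "f (shiftn (- s) x') = f x"
      using factor_map_shiftn[OF assms(1) fm x'(1)] x'(3) by simp
    fix i assume "i \<le> s"
    then show "shiftn (- s) x' i = w i" using x'(2) by (simp add: shiftn_apply)
  qed
qed

text \<open>The splicing step: cut the walk labelled \<open>y\<close> between two visits \<open>c + 1\<close> and
  \<open>c + 1 + d\<close> of the same vertex. The result agrees with \<open>x\<close> below \<open>D - d\<close> because the
  relevant window of \<open>x\<close> recurs at shift \<open>-d\<close>, and its image agrees with \<open>f x\<close> up to \<open>D - d + n\<close>,
  which right-continuation turns into a genuine preimage of \<open>f x\<close>.\<close>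
lemma right_continuing_ae_splice:
  assumes X: "X = {x. \<exists>v :: int \<Rightarrow> nat. \<forall>i. (v i, x i, v (i + 1)) \<in> E}"
    and ss: "subshift X" and fm: "factor_map f X Y" and rc: "right_continuing_ae f X Y n"
    and r: "sliding_block_radius f X r"
    and x: "x \<in> X" "left_transitive X x" and y: "y \<in> X" and fxy: "f x = f y"
    and D: "first_diff_at x y D"
    and v: "\<forall>i. (v i, y i, v (i + 1)) \<in> E" and v_eq: "v (c + 1 + d) = v (c + 1)"
    and d: "0 \<le> d" and cD: "c + d + 2 * int r < D"
    and recur: "\<And>i. c + d - 2 * int r \<le> i \<Longrightarrow> i \<le> D + int n + 2 * int r \<Longrightarrow> x (i - d) = x i"
  shows "\<exists>w\<in>X. f w = f x \<and> first_diff_at w x (D - d)"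
proof -
  define W where "W i = (if i \<le> c then y i else y (i + d))" for i
  have WX: "W \<in> X"
    unfolding W_def using walk_labels_splice[OF X v v_eq] .
  have W_x: "W i = x i" if "i < D - d" for i
  proof (cases "i \<le> c")
    case True then show ?thesis using D cD d by (simp add: W_def first_diff_at_def)
  next
    case False
    then have "W i = x (i + d)" using D that by (simp add: W_def first_diff_at_def)
    also have "\<dots> = x i" using recur[of "i + d"] False that by simp
    finally show ?thesis .
  qed
  have "W (D - d) = y D" using cD by (simp add: W_def)
  moreover have "x (D - d) = x D" using recur[of D] cD by simp
  ultimately have first_diff: "first_diff_at W x (D - d)"
    using D W_x by (auto simp: first_diff_at_def)
  have "f W j = f x j" if j: "j \<le> D - d + int n" for j
  proof (cases "j + int r < D - d")
    case True
    have "f W j = f x (j + 0)"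
      by (rule sliding_block_radius_window[OF ss fm r WX x(1)]) (use True W_x in simp)
    then show ?thesis by simp
  next
    case False
    have "f W j = f y (j + d)"
      by (rule sliding_block_radius_window[OF ss fm r WX y]) (use False cD in \<open>simp add: W_def\<close>)
    also have "\<dots> = f x ((j + d) + - d)"
      unfolding fxy[symmetric]
      by (rule sliding_block_radius_window[OF ss fm r x(1) x(1)]) (use False j cD recur in force)
    finally show ?thesis by simp
  qed
  then obtain w where "w \<in> X" "\<forall>i\<le>D - d. w i = W i" "f w = f x"
    using right_continuing_ae_at[OF ss fm rc WX x] by blast
  with first_diff show ?thesis by (auto simp: first_diff_at_def)
qed

lemma right_continuing_ae_infinite_fibre:
  fixes X :: "(int \<Rightarrow> 'a::finite) set"
  assumes X: "X = {x. \<exists>v :: int \<Rightarrow> nat. \<forall>i. (v i, x i, v (i + 1)) \<in> E}" and "finite E"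
    and ss: "subshift X" and fm: "factor_map f X Y" and rc: "right_continuing_ae f X Y n"
    and x: "x \<in> X" "left_transitive X x" and y: "y \<in> X" and fxy: "f x = f y"
    and D: "first_diff_at x y D"
  shows "infinite {w\<in>X. f w = f x}"
proof
  assume fibre_finite: "finite {w\<in>X. f w = f x}"
  obtain r where r: "sliding_block_radius f X r"
    using continuous_map_on_sliding_block_radius ss fm
    unfolding subshift_def factor_map_def by meson
  obtain v where v: "\<forall>i. (v i, y i, v (i + 1)) \<in> E" using y X by blast
  obtain b :: "nat \<Rightarrow> int" where b0: "b 0 < D - 2 * int r" and b_dec: "\<And>k k'. k < k' \<Longrightarrow> b k' < b k"
    and b_rec: "\<And>k k' i. k \<le> k' \<Longrightarrow> b k - 2 * int r \<le> i \<Longrightarrow> i \<le> D + int n + 2 * int r \<Longrightarrow>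
      x (i + (b k' - b k)) = x i"
    using left_transitive_recurrence_chain[OF ss x,
        where B = "D - 2 * int r" and L = "2 * int r" and H = "D + int n + 2 * int r"] by blast
  have "range (\<lambda>k. v (b k + 1)) \<subseteq> fst ` E" using v by force
  then have "finite (range (\<lambda>k. v (b k + 1)))"
    using \<open>finite E\<close> by (meson finite_imageI finite_subset)
  then obtain k0 where "infinite {k. k0 < k \<and> v (b k + 1) = v (b k0 + 1)}"
    using infinite_repetitions_after by blast
  define K where "K = {k. k0 < k \<and> v (b k + 1) = v (b k0 + 1)}"
  with \<open>infinite _\<close> have "infinite K" by simp
  have "b k0 \<le> b 0" using b_dec by (cases k0) (auto simp: less_imp_le)
  have "\<exists>w\<in>X. f w = f x \<and> first_diff_at w x (D - (b k0 - b k))" if "k \<in> K" for k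
  proof (rule right_continuing_ae_splice[OF X ss fm rc r x y fxy D v])
    have k: "k0 < k" "v (b k + 1) = v (b k0 + 1)" using that by (auto simp: K_def)
    then show "v (b k + 1 + (b k0 - b k)) = v (b k + 1)" by (simp add: add.commute)
    show "0 \<le> b k0 - b k" using b_dec k(1) by (simp add: less_imp_le)
    show "b k + (b k0 - b k) + 2 * int r < D" using \<open>b k0 \<le> b 0\<close> b0 by simp
    fix i assume "b k + (b k0 - b k) - 2 * int r \<le> i" "i \<le> D + int n + 2 * int r"
    then show "x (i - (b k0 - b k)) = x i" using b_rec[of k0 k i] k(1) by (simp add: algebra_simps)
  qed
  then obtain w where w: "\<And>k. k \<in> K \<Longrightarrow> w k \<in> X \<and> f (w k) = f x \<and> first_diff_at (w k) x (D - (b k0 - b k))"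
    by metis
  have "inj_on w K"
  proof (rule inj_onI)
    fix k k' assume "k \<in> K" "k' \<in> K" "w k = w k'"
    then have "D - (b k0 - b k) = D - (b k0 - b k')" using w first_diff_at_unique by metis
    then show "k = k'" using b_dec[of k k'] b_dec[of k' k] by (cases k k' rule: linorder_cases) auto
  qed
  have "w ` K \<subseteq> {w\<in>X. f w = f x}" using w by blast
  then have "finite (w ` K)" using fibre_finite by (rule finite_subset)
  then have "finite K" using \<open>inj_on w K\<close> by (rule finite_imageD)
  with \<open>infinite K\<close> show False by contradiction
qed

theorem mainTheorem3:
  fixes X :: "(int \<Rightarrow> 'a::finite) set" and Y :: "(int \<Rightarrow> 'b::finite) set"
    and f :: "(int \<Rightarrow> 'a) \<Rightarrow> (int \<Rightarrow> 'b)" and n :: nat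
  assumes "sofic X" and "irreducible_shift X"
    and "sofic Y" and "irreducible_shift Y"
    and "factor_map f X Y" and "finite_to_one f X Y"
    and "right_continuing_ae f X Y n"
  shows "right_closing_ae f X"
  unfolding right_closing_ae_def
proof (intro ballI impI)
  fix x y assume "x \<in> X" and y: "y \<in> X" and "left_transitive X x"
    and "left_asymptotic x y" and fxy: "f x = f y"
  note x = \<open>x \<in> X\<close> \<open>left_transitive X x\<close>
  obtain E :: "(nat \<times> 'a \<times> nat) set" where E: "finite E"
    and X: "X = {x. \<exists>v :: int \<Rightarrow> nat. \<forall>i. (v i, x i, v (i + 1)) \<in> E}"
    using assms(1) unfolding sofic_def by blast
  have "subshift X" using assms(1) unfolding sofic_def by blast
  show "x = y"
  proof (rule ccontr)
    assume "x \<noteq> y"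
    then obtain D where "first_diff_at x y D"
      using left_asymptotic_first_diff \<open>left_asymptotic x y\<close> by blast
    then have "infinite {w\<in>X. f w = f x}"
      using right_continuing_ae_infinite_fibre[OF X E \<open>subshift X\<close> assms(5,7) x y fxy] by blast
    moreover have "finite {w\<in>X. f w = f x}"
      using assms(5,6) x(1) unfolding finite_to_one_def factor_map_def by blast
    ultimately show False by contradiction
  qed
qed

end
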